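(* A metrizable space $X$ is $\mathcal{K}_{\Omega}$-Lindel\"{o}f if and only if $t(Q_p(X,\mathbb{D}))=\omega$.
   Context: A function $f:X\to Y$ is quasicontinuous if for every $x\in X$, every open $V\ni f(x)$ and every open $U\ni x$ there is a nonempty open $W\subseteq U$ with $f(W)\subseteq V$. $Q_p(X,\mathbb{D})$ is the set of all quasicontinuous functions from $X$ to the discrete space $\mathbb{D}=\{0,1\}$ with the topology of pointwise convergence. $\mathcal{K}_\Omega$ is the set of families $\mathcal{U}$ of open subsets of $X$ such that $X=\bigcup\{\overline{U}:U\in\mathcal{U}\}$, no element of $\mathcal{U}$ is dense in $X$, and for every finite $F\subseteq X$ there is $U\in\mathcal{U}$ with $F\subseteq\overline{U}$. $X$ is $\mathcal{K}_\Omega$-Lindel\"{o}f if each element of $\mathcal{K}_\Omega$ has a countable subfamily belonging to $\mathcal{K}_\Omega$. $t(Z)=\omega$ means: for every $z\in Z$ and $A\subseteq Z$ with $z\in\overline{A}$ there is a countable $B\subseteq A$ with $z\in\overline{B}$. *)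

theory Defs
  imports "HOL-Analysis.Analysis"
begin

definition quasicontinuous_map :: "'a topology \<Rightarrow> 'b topology \<Rightarrow> ('a \<Rightarrow> 'b) \<Rightarrow> bool" where
  "quasicontinuous_map X Y f \<longleftrightarrow>
     (\<forall>x\<in>topspace X. f x \<in> topspace Y) \<and>
     (\<forall>x\<in>topspace X. \<forall>V U. openin Y V \<and> f x \<in> V \<and> openin X U \<and> x \<in> U \<longrightarrow>
        (\<exists>W. openin X W \<and> W \<noteq> {} \<and> W \<subseteq> U \<and> f ` W \<subseteq> V))"

text \<open>The discrete two-point space D = {0,1}, rendered as bool.\<close>
definition D2 :: "bool topology" where
  "D2 = discrete_topology UNIV"

text \<open>Q_p(X,D): quasicontinuous maps X \<rightarrow> D with the topology of pointwise convergence,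
  i.e. as a subspace of the product D^X (functions are extensional outside topspace X).\<close>
definition Qp :: "'a topology \<Rightarrow> ('a \<Rightarrow> bool) topology" where
  "Qp X = subtopology (product_topology (\<lambda>_. D2) (topspace X))
            {f \<in> extensional (topspace X). quasicontinuous_map X D2 f}"

definition countable_tightness :: "'a topology \<Rightarrow> bool" where
  "countable_tightness Z \<longleftrightarrow>
     (\<forall>z\<in>topspace Z. \<forall>A. A \<subseteq> topspace Z \<and> z \<in> Z closure_of A \<longrightarrow>
        (\<exists>B. B \<subseteq> A \<and> countable B \<and> z \<in> Z closure_of B))"

definition K_Omega :: "'a topology \<Rightarrow> 'a set set set" where
  "K_Omega X = {\<U>. (\<forall>U\<in>\<U>. openin X U) \<and>
      topspace X = \<Union>{X closure_of U | U. U \<in> \<U>} \<and>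
      (\<forall>U\<in>\<U>. X closure_of U \<noteq> topspace X) \<and>
      (\<forall>F. finite F \<and> F \<subseteq> topspace X \<longrightarrow> (\<exists>U\<in>\<U>. F \<subseteq> X closure_of U))}"

definition K_Omega_Lindelof :: "'a topology \<Rightarrow> bool" where
  "K_Omega_Lindelof X \<longleftrightarrow>
     (\<forall>\<U>\<in>K_Omega X. \<exists>\<V>. \<V> \<subseteq> \<U> \<and> countable \<V> \<and> \<V> \<in> K_Omega X)"

end

(*
  The direction from countable tightness holds in every space.  The indicators of the
  closures of the members of a K_Omega-family U are quasicontinuous, and a subfamily is an
  omega-cover exactly when the constant function True lies in the pointwise closure of its
  indicators; a countable set of indicators witnessing tightness yields a countable
  K_Omega-subfamily.

  Conversely, let X be metric and K_Omega-Lindelof.  Every closed nowhere dense set K is then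
  countable, because the open sets whose closures meet K in finitely many points form a
  K_Omega-family.  Let f lie in the closure of A.  By quasicontinuity the set C of
  discontinuities of f, as well as the frontier of each open set int{g = f}, is closed and
  nowhere dense, hence countable.  For each finite H, shrinking neighbourhoods of C and the
  K_Omega-Lindelof property yield countably many g in A agreeing with f on H such that every
  finite subset of X - C lies in the closure of some int{g = f}.  Closing C under adding the
  frontiers of int{g = f} for the functions chosen for its finite subsets gives a countable
  set Q, and the countably many functions chosen for finite subsets of Q approximate f
  pointwise: on Q by construction, and off Q because a point of the closure of int{g = f}
  that is not on its frontier lies in {g = f}.
*)
theory Submission
  imports Defs
begin

lemma topspace_D2 [simp]: "topspace D2 = UNIV"
  by (simp add: D2_def)

lemma openin_D2 [simp]: "openin D2 S"
  by (simp add: D2_def)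

lemma K_Omega_iff:
  "\<U> \<in> K_Omega X \<longleftrightarrow>
     (\<forall>U\<in>\<U>. openin X U) \<and> (\<forall>U\<in>\<U>. X closure_of U \<noteq> topspace X) \<and>
     (\<forall>F. finite F \<and> F \<subseteq> topspace X \<longrightarrow> (\<exists>U\<in>\<U>. F \<subseteq> X closure_of U))"
proof -
  have cover: "topspace X = \<Union>{X closure_of U | U. U \<in> \<U>}"
    if "\<forall>F. finite F \<and> F \<subseteq> topspace X \<longrightarrow> (\<exists>U\<in>\<U>. F \<subseteq> X closure_of U)"
  proof
    show "topspace X \<subseteq> \<Union>{X closure_of U | U. U \<in> \<U>}"
    proof
      fix x assume "x \<in> topspace X"
      then have "finite {x} \<and> {x} \<subseteq> topspace X"
        by simp
      then have "\<exists>U\<in>\<U>. {x} \<subseteq> X closure_of U"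
        by (rule that[rule_format])
      then obtain U where "U \<in> \<U>" "{x} \<subseteq> X closure_of U" ..
      then show "x \<in> \<Union>{X closure_of U | U. U \<in> \<U>}"
        by blast
    qed
  qed (auto intro: closure_of_subset_topspace[THEN subsetD])
  show ?thesis
  proof
    assume "(\<forall>U\<in>\<U>. openin X U) \<and> (\<forall>U\<in>\<U>. X closure_of U \<noteq> topspace X) \<and>
      (\<forall>F. finite F \<and> F \<subseteq> topspace X \<longrightarrow> (\<exists>U\<in>\<U>. F \<subseteq> X closure_of U))"
    with cover show "\<U> \<in> K_Omega X"
      unfolding K_Omega_def by simp
  qed (unfold K_Omega_def mem_Collect_eq, elim conjE, intro conjI)
qed

section \<open>The function space Qp\<close>

lemma topspace_Qp:
  "topspace (Qp X) = {f \<in> extensional (topspace X). quasicontinuous_map X D2 f}"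
  by (auto simp: Qp_def D2_def PiE_def)

lemma openin_Qp:
  "openin (Qp X) T \<longleftrightarrow>
     (\<exists>U. openin (product_topology (\<lambda>_. D2) (topspace X)) U \<and> T = U \<inter> topspace (Qp X))"
  unfolding topspace_Qp by (simp add: Qp_def openin_subtopology)

lemma openin_Qp_agree:
  assumes F: "finite F" "F \<subseteq> topspace X"
  shows "openin (Qp X) {f \<in> topspace (Qp X). \<forall>x\<in>F. f x = z x}"
proof -
  define U where "U = PiE (topspace X) (\<lambda>i. if i \<in> F then {z i} else UNIV)"
  have "finite {i \<in> topspace X. (if i \<in> F then {z i} else UNIV) \<noteq> topspace D2}"
    by (rule finite_subset[of _ F]) (use F in auto)
  then have "openin (product_topology (\<lambda>_. D2) (topspace X)) U"
    unfolding U_def openin_PiE_gen by simp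
  moreover have "{f \<in> topspace (Qp X). \<forall>x\<in>F. f x = z x} = U \<inter> topspace (Qp X)"
  proof (intro equalityI subsetI)
    fix f assume f: "f \<in> {f \<in> topspace (Qp X). \<forall>x\<in>F. f x = z x}"
    then have "\<forall>i\<in>topspace X. f i \<in> (if i \<in> F then {z i} else UNIV)" "f \<in> extensional (topspace X)"
      unfolding topspace_Qp by simp_all
    then have "f \<in> U"
      unfolding U_def PiE_iff by blast
    then show "f \<in> U \<inter> topspace (Qp X)"
      using f by blast
  next
    fix f assume f: "f \<in> U \<inter> topspace (Qp X)"
    have "f x = z x" if "x \<in> F" for x
      using f F(2) that PiE_mem[of f "topspace X" "\<lambda>i. if i \<in> F then {z i} else UNIV" x]
      unfolding U_def by auto
    then show "f \<in> {f \<in> topspace (Qp X). \<forall>x\<in>F. f x = z x}"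
      using f by blast
  qed
  ultimately show ?thesis
    unfolding openin_Qp by blast
qed

lemma openin_Qp_contains_agree:
  assumes T: "openin (Qp X) T" "z \<in> T"
  shows "\<exists>F. finite F \<and> F \<subseteq> topspace X \<and> {f \<in> topspace (Qp X). \<forall>x\<in>F. f x = z x} \<subseteq> T"
proof -
  obtain U where U: "openin (product_topology (\<lambda>_. D2) (topspace X)) U" and TU: "T = U \<inter> topspace (Qp X)"
    using T(1) unfolding openin_Qp by blast
  then obtain V where V: "finite {i \<in> topspace X. V i \<noteq> UNIV}"
      "z \<in> PiE (topspace X) V" "PiE (topspace X) V \<subseteq> U"
    using T(2) unfolding openin_product_topology_alt by auto
  define F where "F = {i \<in> topspace X. V i \<noteq> UNIV}"
  have "f \<in> PiE (topspace X) V" if f: "f \<in> topspace (Qp X)" "\<forall>x\<in>F. f x = z x" for f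
  proof -
    have "f x \<in> V x" if "x \<in> topspace X" for x
    proof (cases "V x = UNIV")
      case False
      then show ?thesis
        using f(2) V(2) that unfolding F_def by (auto simp: PiE_iff)
    qed simp
    then show ?thesis
      using f(1) unfolding topspace_Qp by (simp add: PiE_iff)
  qed
  then have "{f \<in> topspace (Qp X). \<forall>x\<in>F. f x = z x} \<subseteq> T"
    using V(3) TU by blast
  moreover have "finite F" "F \<subseteq> topspace X"
    using V(1) unfolding F_def by auto
  ultimately show ?thesis
    by blast
qed

lemma in_closure_of_Qp:
  assumes S: "S \<subseteq> topspace (Qp X)"
  shows "z \<in> Qp X closure_of S \<longleftrightarrow> z \<in> topspace (Qp X) \<and>
     (\<forall>F. finite F \<and> F \<subseteq> topspace X \<longrightarrow> (\<exists>s\<in>S. \<forall>x\<in>F. s x = z x))"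
  (is "_ \<longleftrightarrow> _ \<and> ?approx")
proof
  assume z: "z \<in> Qp X closure_of S"
  then have zQ: "z \<in> topspace (Qp X)"
    by (rule closure_of_subset_topspace[THEN subsetD])
  have "\<exists>s\<in>S. \<forall>x\<in>F. s x = z x" if F: "finite F" "F \<subseteq> topspace X" for F
  proof -
    define N where "N = {f \<in> topspace (Qp X). \<forall>x\<in>F. f x = z x}"
    have "z \<in> N" "openin (Qp X) N"
      unfolding N_def using zQ openin_Qp_agree[OF F] by auto
    then obtain s where "s \<in> S" "s \<in> N"
      using z unfolding in_closure_of by blast
    then show ?thesis
      unfolding N_def by blast
  qed
  with zQ show "z \<in> topspace (Qp X) \<and> ?approx"
    by blast
next
  assume R: "z \<in> topspace (Qp X) \<and> ?approx"
  have "\<exists>s. s \<in> S \<and> s \<in> T" if T: "z \<in> T" "openin (Qp X) T" for T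
  proof -
    obtain F where F: "finite F" "F \<subseteq> topspace X" "{f \<in> topspace (Qp X). \<forall>x\<in>F. f x = z x} \<subseteq> T"
      using openin_Qp_contains_agree[OF T(2,1)] by blast
    then obtain s where "s \<in> S" "\<forall>x\<in>F. s x = z x"
      using R by blast
    then show ?thesis
      using S F(3) by blast
  qed
  then show "z \<in> Qp X closure_of S"
    using R unfolding in_closure_of by blast
qed

section \<open>Quasicontinuous maps into D2\<close>

lemma quasicontinuous_map_D2_in_closure_interior_fibre:
  assumes "quasicontinuous_map X D2 f" "x \<in> topspace X"
  shows "x \<in> X closure_of (X interior_of {y \<in> topspace X. f y = f x})"
  unfolding in_closure_of
proof (intro conjI allI impI)
  fix T assume T: "x \<in> T \<and> openin X T"
  then obtain W where W: "openin X W" "W \<noteq> {}" "W \<subseteq> T" "f ` W \<subseteq> {f x}"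
    using assms unfolding quasicontinuous_map_def by (metis openin_D2 singletonI)
  then have "W \<subseteq> X interior_of {y \<in> topspace X. f y = f x}"
    by (intro interior_of_maximal) (auto dest: openin_subset)
  then show "\<exists>y. y \<in> X interior_of {y \<in> topspace X. f y = f x} \<and> y \<in> T"
    using W by blast
qed (fact assms(2))

definition closure_indicator :: "'a topology \<Rightarrow> 'a set \<Rightarrow> 'a \<Rightarrow> bool" where
  "closure_indicator X U = restrict (\<lambda>x. x \<in> X closure_of U) (topspace X)"

lemma quasicontinuous_map_closure_indicator:
  assumes "openin X U"
  shows "quasicontinuous_map X D2 (closure_indicator X U)"
  unfolding quasicontinuous_map_def closure_indicator_def
proof (intro conjI ballI allI impI)
  let ?h = "restrict (\<lambda>x. x \<in> X closure_of U) (topspace X)"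
  fix x V T
  assume x: "x \<in> topspace X" and VT: "openin D2 V \<and> ?h x \<in> V \<and> openin X T \<and> x \<in> T"
  show "\<exists>W. openin X W \<and> W \<noteq> {} \<and> W \<subseteq> T \<and> ?h ` W \<subseteq> V"
  proof (cases "x \<in> X closure_of U")
    case True
    then obtain y where "y \<in> U" "y \<in> T"
      using VT by (auto simp: in_closure_of)
    moreover have "U \<subseteq> X closure_of U" "U \<subseteq> topspace X"
      using assms by (simp_all add: closure_of_subset openin_subset)
    ultimately show ?thesis
      using True VT x assms by (intro exI[of _ "T \<inter> U"]) auto
  next
    case False
    have "openin X (T - X closure_of U)"
      using VT by (simp add: openin_diff)
    with False VT x show ?thesis
      by (intro exI[of _ "T - X closure_of U"]) (auto dest: openin_subset)
  qed
qed simp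

lemma closure_indicator_in_topspace_Qp:
  assumes "openin X U"
  shows "closure_indicator X U \<in> topspace (Qp X)"
  using quasicontinuous_map_closure_indicator[OF assms]
  by (simp add: topspace_Qp closure_indicator_def)

lemma closure_indicator_topspace_in_closure_of_Qp_iff:
  assumes "\<forall>U\<in>\<U>. openin X U"
  shows "closure_indicator X (topspace X) \<in> Qp X closure_of (closure_indicator X ` \<U>) \<longleftrightarrow>
    (\<forall>F. finite F \<and> F \<subseteq> topspace X \<longrightarrow> (\<exists>U\<in>\<U>. F \<subseteq> X closure_of U))"
proof -
  have "closure_indicator X ` \<U> \<subseteq> topspace (Qp X)"
    using assms closure_indicator_in_topspace_Qp by blast
  moreover have "closure_indicator X (topspace X) \<in> topspace (Qp X)"
    by (simp add: closure_indicator_in_topspace_Qp)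
  moreover have "(\<forall>x\<in>F. closure_indicator X U x = closure_indicator X (topspace X) x) \<longleftrightarrow>
      F \<subseteq> X closure_of U" if "F \<subseteq> topspace X" for F U
    using that by (auto simp: closure_indicator_def)
  ultimately show ?thesis
    by (simp add: in_closure_of_Qp)
qed

text \<open>For maps into the discrete space D2 these are exactly the points of discontinuity.\<close>

definition discontinuity_points :: "'a topology \<Rightarrow> ('a \<Rightarrow> bool) \<Rightarrow> 'a set" where
  "discontinuity_points X f = {x \<in> topspace X. x \<notin> X interior_of {y \<in> topspace X. f y = f x}}"

lemma closedin_discontinuity_points: "closedin X (discontinuity_points X f)"
proof -
  have "topspace X - discontinuity_points X f =
          (\<Union>x\<in>topspace X. X interior_of {y \<in> topspace X. f y = f x})"
  proof
    show "topspace X - discontinuity_points X f \<subseteq> (\<Union>x\<in>topspace X. X interior_of {y \<in> topspace X. f y = f x})"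
      unfolding discontinuity_points_def by blast
  next
    show "(\<Union>x\<in>topspace X. X interior_of {y \<in> topspace X. f y = f x}) \<subseteq> topspace X - discontinuity_points X f"
    proof
      fix z assume "z \<in> (\<Union>x\<in>topspace X. X interior_of {y \<in> topspace X. f y = f x})"
      then obtain x where z: "z \<in> X interior_of {y \<in> topspace X. f y = f x}"
        by blast
      then have "z \<in> {y \<in> topspace X. f y = f x}"
        by (rule interior_of_subset[THEN subsetD])
      then have "z \<in> topspace X" "f z = f x"
        by simp_all
      with z show "z \<in> topspace X - discontinuity_points X f"
        unfolding discontinuity_points_def by simp
    qed
  qed
  then show ?thesis
    unfolding closedin_def discontinuity_points_def by auto
qed

lemma interior_of_discontinuity_points:
  assumes "quasicontinuous_map X D2 f"
  shows "X interior_of discontinuity_points X f = {}"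
proof (rule ccontr)
  assume "X interior_of discontinuity_points X f \<noteq> {}"
  then obtain x where x: "x \<in> X interior_of discontinuity_points X f"
    by blast
  then have "x \<in> X closure_of (X interior_of {z \<in> topspace X. f z = f x})"
    by (intro quasicontinuous_map_D2_in_closure_interior_fibre[OF assms])
      (rule interior_of_subset_topspace[THEN subsetD])
  then obtain y where y: "y \<in> X interior_of {z \<in> topspace X. f z = f x}"
    and y_disc: "y \<in> X interior_of discontinuity_points X f"
    using x openin_interior_of[of X "discontinuity_points X f"] unfolding in_closure_of by blast
  have "y \<in> {z \<in> topspace X. f z = f x}"
    using y by (rule interior_of_subset[THEN subsetD])
  then have "{z \<in> topspace X. f z = f y} = {z \<in> topspace X. f z = f x}"
    by simp
  moreover have "y \<in> discontinuity_points X f"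
    using y_disc by (rule interior_of_subset[THEN subsetD])
  ultimately show False
    using y unfolding discontinuity_points_def by simp
qed

lemma quasicontinuous_map_D2_agree_in_closure_interior:
  assumes g: "quasicontinuous_map X D2 g"
    and x: "x \<in> topspace X - discontinuity_points X f" "g x = f x"
  shows "x \<in> X closure_of (X interior_of {y \<in> topspace X. g y = f y})"
proof -
  let ?Ig = "X interior_of {y \<in> topspace X. g y = g x}"
  let ?If = "X interior_of {y \<in> topspace X. f y = f x}"
  have "x \<in> ?If"
    using x by (simp add: discontinuity_points_def)
  moreover have "x \<in> X closure_of ?Ig"
    using x by (intro quasicontinuous_map_D2_in_closure_interior_fibre[OF g]) simp
  ultimately have "x \<in> X closure_of (?If \<inter> ?Ig)"
    by (metis IntI openin_Int_closure_of_subset openin_interior_of subsetD)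
  moreover have "?If \<inter> ?Ig \<subseteq> X interior_of {y \<in> topspace X. g y = f y}"
    unfolding interior_of_Int[symmetric] by (intro interior_of_mono subsetI) (simp add: x(2))
  ultimately show ?thesis
    using closure_of_mono by blast
qed

lemma quasicontinuous_map_D2_agreeing_closure_cover:
  assumes A_qc: "\<And>g. g \<in> A \<Longrightarrow> quasicontinuous_map X D2 g"
    and approx: "\<And>F. finite F \<Longrightarrow> F \<subseteq> topspace X \<Longrightarrow> \<exists>g\<in>A. \<forall>x\<in>F. g x = f x"
    and T: "openin X T" "discontinuity_points X f \<subseteq> T"
    and H: "finite H" "H \<subseteq> topspace X" and F: "finite F" "F \<subseteq> topspace X"
  shows "\<exists>g\<in>A. (\<forall>x\<in>H. g x = f x) \<and>
           F \<subseteq> X closure_of (X interior_of {x \<in> topspace X. g x = f x} \<union> T)"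
proof -
  have "\<exists>g\<in>A. \<forall>x\<in>F \<union> H. g x = f x"
    using F H by (intro approx) auto
  then obtain g where g: "g \<in> A" "\<forall>x\<in>F \<union> H. g x = f x"
    by blast
  have "x \<in> X closure_of (X interior_of {x \<in> topspace X. g x = f x}) \<union> X closure_of T" if x: "x \<in> F" for x
  proof (cases "x \<in> discontinuity_points X f")
    case True
    then have "x \<in> T"
      using T(2) by blast
    then show ?thesis
      using closure_of_subset[OF openin_subset[OF T(1)]] by blast
  next
    case False
    then have "x \<in> topspace X - discontinuity_points X f" "g x = f x"
      using x F g(2) by auto
    then show ?thesis
      using quasicontinuous_map_D2_agree_in_closure_interior[OF A_qc[OF g(1)]] by blast
  qed
  then have "F \<subseteq> X closure_of (X interior_of {x \<in> topspace X. g x = f x} \<union> T)"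
    by auto
  then show ?thesis
    using g by blast
qed

lemma countable_tightness_Qp_imp_K_Omega_Lindelof:
  assumes "countable_tightness (Qp X)"
  shows "K_Omega_Lindelof X"
  unfolding K_Omega_Lindelof_def
proof
  fix \<U> assume "\<U> \<in> K_Omega X"
  then have open_U: "\<forall>U\<in>\<U>. openin X U" and nondense_U: "\<forall>U\<in>\<U>. X closure_of U \<noteq> topspace X"
    and omega_U: "\<forall>F. finite F \<and> F \<subseteq> topspace X \<longrightarrow> (\<exists>U\<in>\<U>. F \<subseteq> X closure_of U)"
    by (simp_all add: K_Omega_iff)
  let ?one = "closure_indicator X (topspace X)"
  have one_cl: "?one \<in> Qp X closure_of (closure_indicator X ` \<U>)"
    using omega_U by (simp only: closure_indicator_topspace_in_closure_of_Qp_iff[OF open_U])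
  have one_Qp: "?one \<in> topspace (Qp X)" and U_Qp: "closure_indicator X ` \<U> \<subseteq> topspace (Qp X)"
    using open_U closure_indicator_in_topspace_Qp by auto
  obtain B where B: "B \<subseteq> closure_indicator X ` \<U>" "countable B" "?one \<in> Qp X closure_of B"
    using assms[unfolded countable_tightness_def, rule_format, OF one_Qp conjI[OF U_Qp one_cl]] by blast
  then obtain \<V> where V: "\<V> \<subseteq> \<U>" "countable \<V>" "B = closure_indicator X ` \<V>"
    using countable_subset_image[of B "closure_indicator X" \<U>] by blast
  have open_V: "\<forall>V\<in>\<V>. openin X V"
    using V(1) open_U by blast
  have nondense_V: "\<forall>V\<in>\<V>. X closure_of V \<noteq> topspace X"
    using V(1) nondense_U by blast
  have "?one \<in> Qp X closure_of (closure_indicator X ` \<V>)"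
    using B(3) unfolding V(3) .
  then have "\<forall>F. finite F \<and> F \<subseteq> topspace X \<longrightarrow> (\<exists>V\<in>\<V>. F \<subseteq> X closure_of V)"
    by (simp only: closure_indicator_topspace_in_closure_of_Qp_iff[OF open_V])
  then have "\<V> \<in> K_Omega X"
    unfolding K_Omega_iff using open_V nondense_V by (intro conjI)
  then show "\<exists>\<V>\<subseteq>\<U>. countable \<V> \<and> \<V> \<in> K_Omega X"
    using V by blast
qed

section \<open>K_Omega-Lindelof spaces\<close>

lemma interior_of_frontier_of_openin:
  assumes "openin X S"
  shows "X interior_of (X frontier_of S) = {}"
proof -
  have "X interior_of (X frontier_of S) \<inter> S = {}"
    using interior_of_subset[of X "X frontier_of S"] assms by (auto simp: frontier_of_openin)
  then have "X interior_of (X frontier_of S) \<inter> X closure_of S = {}"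
    by (simp add: openin_Int_closure_of_eq_empty)
  then show ?thesis
    using interior_of_subset[of X "X frontier_of S"] by (auto simp: frontier_of_def)
qed

lemma closure_of_interior_of_diff_frontier_of:
  "X closure_of (X interior_of S) - X frontier_of (X interior_of S) \<subseteq> S"
  using interior_of_subset[of X S] by (auto simp: frontier_of_def)

lemma regular_space_open_subset_avoiding_nowhere_dense:
  assumes X: "regular_space X" and K: "closedin X K" "X interior_of K = {}"
    and G: "openin X G" "G \<noteq> {}"
  obtains W where "openin X W" "W \<noteq> {}" "W \<subseteq> G" "disjnt K (X closure_of W)"
proof -
  have "\<not> G \<subseteq> K"
    using G interior_of_maximal K(2) by blast
  then obtain x where x: "x \<in> G" "x \<notin> K"
    by blast
  then have "x \<in> topspace X - K"
    using openin_subset[OF G(1)] by blast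
  then obtain V where V: "openin X V" "x \<in> V" "disjnt K (X closure_of V)"
    using X K(1) unfolding regular_space by blast
  have "disjnt K (X closure_of (V \<inter> G))"
    using V(3) closure_of_mono[of "V \<inter> G" V X] by (auto simp: disjnt_def)
  moreover have "openin X (V \<inter> G)" "V \<inter> G \<noteq> {}" "V \<inter> G \<subseteq> G"
    using V G x by auto
  ultimately show thesis
    using that by blast
qed

lemma countable_closure_under_finitary_map:
  assumes "countable C" and G: "\<And>H. finite H \<Longrightarrow> countable (G H)"
  shows "\<exists>Q. countable Q \<and> C \<subseteq> Q \<and> (\<forall>H. finite H \<and> H \<subseteq> Q \<longrightarrow> G H \<subseteq> Q)"
proof -
  define step where "step Q = Q \<union> (\<Union>H\<in>{H. finite H \<and> H \<subseteq> Q}. G H)" for Q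
  define Qs where "Qs k = (step ^^ k) C" for k
  have Qs_0: "Qs 0 = C" and Qs_Suc: "Qs (Suc k) = step (Qs k)" for k
    by (simp_all add: Qs_def)
  have countable_step: "countable (step Q)" if "countable Q" for Q
  proof -
    have "countable {H. finite H \<and> H \<subseteq> Q}"
      using that by (rule countable_Collect_finite_subset)
    then show ?thesis
      unfolding step_def using that G by (intro countable_Un countable_UN) auto
  qed
  have countable_Qs: "countable (Qs k)" for k
    by (induction k) (simp_all add: Qs_0 Qs_Suc assms(1) countable_step)
  have "incseq Qs"
    by (rule incseq_SucI) (simp add: Qs_Suc step_def)
  have finite_in_stage: "\<exists>k. H \<subseteq> Qs k" if "finite H" "H \<subseteq> (\<Union>k. Qs k)" for H
    using that
  proof (induction H rule: finite_induct)
    case (insert x H)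
    then obtain k k' where "H \<subseteq> Qs k" "x \<in> Qs k'"
      by blast
    moreover have "Qs k \<subseteq> Qs (max k k')" "Qs k' \<subseteq> Qs (max k k')"
      using \<open>incseq Qs\<close> unfolding incseq_def by simp_all
    ultimately have "insert x H \<subseteq> Qs (max k k')"
      by blast
    then show ?case ..
  qed simp
  have "G H \<subseteq> (\<Union>k. Qs k)" if H: "finite H" "H \<subseteq> (\<Union>k. Qs k)" for H
  proof -
    obtain k where "H \<subseteq> Qs k"
      using finite_in_stage[OF H] by blast
    then have "G H \<subseteq> Qs (Suc k)"
      unfolding Qs_Suc step_def using H(1) by blast
    then show ?thesis
      by blast
  qed
  moreover have "C \<subseteq> (\<Union>k. Qs k)"
    using Qs_0 by blast
  ultimately show ?thesis
    using countable_Qs by (intro exI[of _ "\<Union>k. Qs k"]) auto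
qed

text \<open>A family of open sets whose closures cover every finite set may consist of dense sets;
  removing closures of nonempty open sets turns it into a K_Omega-family without losing this
  property, so the K_Omega-Lindelof property applies to it.\<close>

lemma omega_cover_minus_closures_in_K_Omega:
  assumes X: "regular_space X" "t1_space X" "infinite (topspace X)"
    and A_open: "\<And>i. i \<in> I \<Longrightarrow> openin X (A i)"
    and A_omega: "\<And>F. finite F \<Longrightarrow> F \<subseteq> topspace X \<Longrightarrow> \<exists>i\<in>I. F \<subseteq> X closure_of (A i)"
  shows "{A i - X closure_of W | i W. i \<in> I \<and> openin X W \<and> W \<noteq> {}} \<in> K_Omega X"
    (is "?\<U> \<in> _")
proof -
  have "X closure_of U \<noteq> topspace X" if "U \<in> ?\<U>" for U
  proof -
    obtain i W where U: "U = A i - X closure_of W" "i \<in> I" and W: "openin X W" "W \<noteq> {}"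
      using \<open>U \<in> ?\<U>\<close> by blast
    have "W \<subseteq> X closure_of W"
      using W(1) by (simp add: closure_of_subset openin_subset)
    moreover have "A i \<subseteq> topspace X"
      using A_open[OF U(2)] by (rule openin_subset)
    ultimately have "U \<subseteq> topspace X - W"
      using U(1) by blast
    then have "X closure_of U \<subseteq> topspace X - W"
      using W(1) by (simp add: closure_of_minimal closedin_diff)
    then show ?thesis
      using W(2) openin_subset[OF W(1)] by blast
  qed
  moreover have "\<exists>U\<in>?\<U>. F \<subseteq> X closure_of U" if F: "finite F" "F \<subseteq> topspace X" for F
  proof -
    have "topspace X - F \<noteq> {}"
      using X(3) F(1) by (intro infinite_imp_nonempty Diff_infinite_finite)
    then obtain y where y: "y \<in> topspace X - F"
      by blast
    have "closedin X F"
      using X(2) F by (simp add: t1_space_closedin_finite)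
    then obtain W where W: "openin X W" "y \<in> W" "disjnt F (X closure_of W)"
      using X(1) y unfolding regular_space by blast
    obtain i where i: "i \<in> I" "F \<subseteq> X closure_of (A i)"
      using A_omega F by blast
    have "F \<subseteq> (topspace X - X closure_of W) \<inter> X closure_of (A i)"
      using F W(3) i(2) by (auto simp: disjnt_def)
    also have "\<dots> \<subseteq> X closure_of ((topspace X - X closure_of W) \<inter> A i)"
      by (simp add: openin_Int_closure_of_subset openin_diff)
    also have "(topspace X - X closure_of W) \<inter> A i = A i - X closure_of W"
      using openin_subset[OF A_open[OF i(1)]] by blast
    finally have "F \<subseteq> X closure_of (A i - X closure_of W)" .
    moreover have "A i - X closure_of W \<in> ?\<U>"
      using i(1) W(1,2) by blast
    ultimately show ?thesis
      by blast
  qed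
  moreover have "\<forall>U\<in>?\<U>. openin X U"
    using A_open by (auto intro: openin_diff)
  ultimately show ?thesis
    unfolding K_Omega_iff by blast
qed

lemma K_Omega_Lindelof_countable_omega_subcover:
  assumes KOL: "K_Omega_Lindelof X"
    and X: "regular_space X" "t1_space X" "infinite (topspace X)"
    and A_open: "\<And>i. i \<in> I \<Longrightarrow> openin X (A i)"
    and A_omega: "\<And>F. finite F \<Longrightarrow> F \<subseteq> topspace X \<Longrightarrow> \<exists>i\<in>I. F \<subseteq> X closure_of (A i)"
  shows "\<exists>J\<subseteq>I. countable J \<and>
           (\<forall>F. finite F \<and> F \<subseteq> topspace X \<longrightarrow> (\<exists>i\<in>J. F \<subseteq> X closure_of (A i)))"
proof -
  let ?\<U> = "{A i - X closure_of W | i W. i \<in> I \<and> openin X W \<and> W \<noteq> {}}"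
  obtain \<V> where \<V>: "\<V> \<subseteq> ?\<U>" "countable \<V>" "\<V> \<in> K_Omega X"
    using KOL omega_cover_minus_closures_in_K_Omega[OF X A_open A_omega]
    unfolding K_Omega_Lindelof_def by blast
  have "\<forall>V\<in>\<V>. \<exists>i. i \<in> I \<and> V \<subseteq> A i"
    using \<V>(1) by blast
  then have "\<exists>idx. \<forall>V\<in>\<V>. idx V \<in> I \<and> V \<subseteq> A (idx V)"
    by (rule bchoice)
  then obtain idx where idx: "\<forall>V\<in>\<V>. idx V \<in> I \<and> V \<subseteq> A (idx V)" ..
  show ?thesis
  proof (intro exI[of _ "idx ` \<V>"] conjI allI impI)
    show "idx ` \<V> \<subseteq> I" "countable (idx ` \<V>)"
      using idx \<V>(2) by auto
    fix F assume "finite F \<and> F \<subseteq> topspace X"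
    then obtain V where V: "V \<in> \<V>" "F \<subseteq> X closure_of V"
      using \<V>(3) unfolding K_Omega_iff by blast
    moreover have "X closure_of V \<subseteq> X closure_of (A (idx V))"
      using idx V(1) by (simp add: closure_of_mono)
    ultimately have "F \<subseteq> X closure_of (A (idx V))"
      by blast
    then show "\<exists>i\<in>idx ` \<V>. F \<subseteq> X closure_of (A i)"
      using V(1) by blast
  qed
qed

section \<open>Metric K_Omega-Lindelof spaces\<close>

context Metric_space
begin

lemma closure_of_UN_shrinking_to_point:
  assumes "p \<in> M" and W: "\<And>m. W m \<subseteq> mball p (inverse (real (Suc m)))"
  shows "mtopology closure_of (\<Union>m. W m) \<subseteq> insert p (\<Union>m. mtopology closure_of (W m))"
proof
  fix y assume y: "y \<in> mtopology closure_of (\<Union>m. W m)"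
  show "y \<in> insert p (\<Union>m. mtopology closure_of (W m))"
  proof (cases "y = p")
    case False
    have "y \<in> M"
      using y closure_of_subset_topspace by fastforce
    then have "0 < d p y"
      using False assms(1) by simp
    then obtain N where N: "inverse (real (Suc N)) < d p y"
      using reals_Archimedean by blast
    define P where "P = (\<Union>m<N. mtopology closure_of (W m)) \<union> mcball p (inverse (real (Suc N)))"
    have "closedin mtopology P"
      unfolding P_def by (intro closedin_Un closedin_Union) auto
    moreover have "W m \<subseteq> P" for m
    proof (cases "m < N")
      case True
      have "W m \<subseteq> mtopology closure_of (W m)"
        using W[of m] mball_subset_mspace by (intro closure_of_subset) auto
      then show ?thesis
        unfolding P_def using True by blast
    next
      case False
      then have "inverse (real (Suc m)) \<le> inverse (real (Suc N))"
        by (simp add: le_imp_inverse_le)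
      then have "mball p (inverse (real (Suc m))) \<subseteq> mcball p (inverse (real (Suc N)))"
        using mball_subset_mcball mcball_subset_concentric by blast
      then show ?thesis
        unfolding P_def using W[of m] by blast
    qed
    ultimately have "y \<in> P"
      using y closure_of_minimal[of "\<Union>m. W m" P mtopology] by blast
    then show ?thesis
      using N unfolding P_def by auto
  qed simp
qed

lemma open_closure_of_meets_nowhere_dense_at_point:
  assumes K: "closedin mtopology K" "mtopology interior_of K = {}" and p: "p \<in> M"
  shows "\<exists>U. openin mtopology U \<and> p \<in> mtopology closure_of U \<and> mtopology closure_of U \<inter> K \<subseteq> {p}"
proof -
  have "\<exists>W. openin mtopology W \<and> W \<noteq> {} \<and> W \<subseteq> mball p (inverse (real (Suc m))) \<and>
            disjnt K (mtopology closure_of W)" for m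
  proof -
    have "p \<in> mball p (inverse (real (Suc m)))"
      using p by simp
    then have "openin mtopology (mball p (inverse (real (Suc m))))" "mball p (inverse (real (Suc m))) \<noteq> {}"
      by blast+
    then obtain W where "openin mtopology W" "W \<noteq> {}" "W \<subseteq> mball p (inverse (real (Suc m)))"
      "disjnt K (mtopology closure_of W)"
      by (rule regular_space_open_subset_avoiding_nowhere_dense[OF regular_space_mtopology K])
    then show ?thesis
      by blast
  qed
  then have "\<exists>W. \<forall>m. openin mtopology (W m) \<and> W m \<noteq> {} \<and> W m \<subseteq> mball p (inverse (real (Suc m))) \<and>
            disjnt K (mtopology closure_of (W m))"
    by (intro choice allI)
  then obtain W where W: "\<forall>m. openin mtopology (W m) \<and> W m \<noteq> {} \<and>
      W m \<subseteq> mball p (inverse (real (Suc m))) \<and> disjnt K (mtopology closure_of (W m))" ..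
  then have W_ball: "\<And>m. W m \<subseteq> mball p (inverse (real (Suc m)))"
    by blast
  have "p \<in> mtopology closure_of (\<Union>m. W m)"
    unfolding metric_closure_of
  proof (intro CollectI conjI allI impI p)
    fix r :: real assume "0 < r"
    then obtain m where m: "inverse (real (Suc m)) < r"
      using reals_Archimedean by blast
    obtain y where y: "y \<in> W m"
      using W by blast
    then have "y \<in> mball p (inverse (real (Suc m)))"
      using W_ball by blast
    then have "y \<in> mball p r"
      using m by auto
    then show "\<exists>y\<in>\<Union>m. W m. y \<in> mball p r"
      using y by blast
  qed
  moreover have "mtopology closure_of (\<Union>m. W m) \<inter> K \<subseteq> {p}"
    using closure_of_UN_shrinking_to_point[OF p W_ball] W by (auto simp: disjnt_iff)
  moreover have "openin mtopology (\<Union>m. W m)"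
    using W by blast
  ultimately show ?thesis
    by blast
qed

lemma open_closure_of_meets_nowhere_dense_in_finite:
  assumes K: "closedin mtopology K" "mtopology interior_of K = {}" and F: "finite F" "F \<subseteq> M"
  shows "\<exists>U. openin mtopology U \<and> F \<subseteq> mtopology closure_of U \<and> mtopology closure_of U \<inter> K \<subseteq> F"
proof -
  have "\<forall>p\<in>F. \<exists>U. openin mtopology U \<and> p \<in> mtopology closure_of U \<and> mtopology closure_of U \<inter> K \<subseteq> {p}"
    using open_closure_of_meets_nowhere_dense_at_point[OF K] F(2) by blast
  then have "\<exists>U. \<forall>p\<in>F. openin mtopology (U p) \<and> p \<in> mtopology closure_of (U p) \<and>
      mtopology closure_of (U p) \<inter> K \<subseteq> {p}"
    by (rule bchoice)
  then obtain U where U: "\<forall>p\<in>F. openin mtopology (U p) \<and> p \<in> mtopology closure_of (U p) \<and>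
      mtopology closure_of (U p) \<inter> K \<subseteq> {p}" ..
  have "mtopology closure_of (\<Union>(U ` F)) = (\<Union>p\<in>F. mtopology closure_of (U p))"
    using F(1) by (simp add: closure_of_Union)
  moreover have "openin mtopology (\<Union>(U ` F))"
    using U by blast
  ultimately show ?thesis
    using U by (intro exI[of _ "\<Union>(U ` F)"]) blast
qed

lemma K_Omega_Lindelof_imp_countable_nowhere_dense:
  assumes KOL: "K_Omega_Lindelof mtopology"
    and K: "closedin mtopology K" "mtopology interior_of K = {}"
  shows "countable K"
proof (cases "finite K")
  case False
  have KM: "K \<subseteq> M"
    using closedin_subset[OF K(1)] by simp
  define \<U> where "\<U> = {U. openin mtopology U \<and> finite (mtopology closure_of U \<inter> K)}"
  have "\<U> \<in> K_Omega mtopology"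
    unfolding K_Omega_iff
  proof (intro conjI ballI allI impI)
    fix U assume "U \<in> \<U>"
    then show "openin mtopology U"
      unfolding \<U>_def by blast
    show "mtopology closure_of U \<noteq> topspace mtopology"
      using \<open>U \<in> \<U>\<close> False KM unfolding \<U>_def by (metis inf.absorb2 mem_Collect_eq topspace_mtopology)
  next
    fix F assume "finite F \<and> F \<subseteq> topspace mtopology"
    then have "\<exists>U. openin mtopology U \<and> F \<subseteq> mtopology closure_of U \<and> mtopology closure_of U \<inter> K \<subseteq> F"
      by (intro open_closure_of_meets_nowhere_dense_in_finite[OF K]) auto
    then obtain U where "openin mtopology U" "F \<subseteq> mtopology closure_of U" "mtopology closure_of U \<inter> K \<subseteq> F"
      by blast
    then show "\<exists>U\<in>\<U>. F \<subseteq> mtopology closure_of U"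
      unfolding \<U>_def using \<open>finite F \<and> F \<subseteq> topspace mtopology\<close> finite_subset by blast
  qed
  then obtain \<V> where \<V>: "\<V> \<subseteq> \<U>" "countable \<V>" "\<V> \<in> K_Omega mtopology"
    using KOL unfolding K_Omega_Lindelof_def by blast
  have "K \<subseteq> (\<Union>V\<in>\<V>. mtopology closure_of V \<inter> K)"
  proof
    fix y assume "y \<in> K"
    then have "finite {y} \<and> {y} \<subseteq> topspace mtopology"
      using KM by auto
    then obtain V where "V \<in> \<V>" "{y} \<subseteq> mtopology closure_of V"
      using \<V>(3) unfolding K_Omega_iff by blast
    then show "y \<in> (\<Union>V\<in>\<V>. mtopology closure_of V \<inter> K)"
      using \<open>y \<in> K\<close> by blast
  qed
  moreover have "countable (\<Union>V\<in>\<V>. mtopology closure_of V \<inter> K)"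
    using \<V>(1,2) unfolding \<U>_def by (intro countable_UN) (auto intro: countable_finite)
  ultimately show ?thesis
    by (rule countable_subset)
qed (rule countable_finite)

lemma eventually_not_in_closure_of_neighbourhood:
  assumes C: "closedin mtopology C" and x: "x \<in> M - C"
  shows "\<forall>\<^sub>F m in sequentially.
           x \<notin> mtopology closure_of (\<Union>c\<in>C. mball c (inverse (real (Suc m))))"
proof -
  obtain r where r: "0 < r" "disjnt C (mball x r)"
    using C x unfolding closedin_metric by blast
  then have "0 < r / 2"
    by simp
  then obtain N where N: "inverse (real (Suc N)) < r / 2"
    using reals_Archimedean by blast
  show ?thesis
  proof (rule eventually_sequentiallyI[of N])
    fix m assume "N \<le> m"
    then have "inverse (real (Suc m)) \<le> inverse (real (Suc N))"
      by (simp add: le_imp_inverse_le)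
    then have em: "inverse (real (Suc m)) < r / 2"
      using N by linarith
    show "x \<notin> mtopology closure_of (\<Union>c\<in>C. mball c (inverse (real (Suc m))))"
    proof
      assume "x \<in> mtopology closure_of (\<Union>c\<in>C. mball c (inverse (real (Suc m))))"
      then have "\<forall>\<epsilon>>0. \<exists>y\<in>(\<Union>c\<in>C. mball c (inverse (real (Suc m)))). y \<in> mball x \<epsilon>"
        unfolding metric_closure_of by blast
      then obtain c y where c: "c \<in> C" "y \<in> mball c (inverse (real (Suc m)))"
        and y: "y \<in> mball x (r / 2)"
        using \<open>0 < r / 2\<close> by blast
      have "d x c \<le> d x y + d y c"
        using triangle c y by auto
      also have "\<dots> < r"
        using y c em commute[of c y] by auto
      finally have "c \<in> mball x r"
        using c y by auto
      then show False
        using r(2) c(1) by (auto simp: disjnt_def)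
    qed
  qed
qed

lemma closedin_shrinking_open_neighbourhoods:
  assumes C: "closedin mtopology C"
  obtains T :: "nat \<Rightarrow> 'a set" where "\<And>m. openin mtopology (T m)" "\<And>m. C \<subseteq> T m"
    "\<And>F. finite F \<Longrightarrow> F \<subseteq> M - C \<Longrightarrow> \<exists>m. F \<inter> mtopology closure_of (T m) = {}"
proof -
  define T where "T m = (\<Union>c\<in>C. mball c (inverse (real (Suc m))))" for m
  have T_open: "openin mtopology (T m)" for m
    unfolding T_def by blast
  have C_T: "C \<subseteq> T m" for m
  proof
    fix c assume "c \<in> C"
    then have "c \<in> mball c (inverse (real (Suc m)))"
      using closedin_subset[OF C] by auto
    then show "c \<in> T m"
      unfolding T_def using \<open>c \<in> C\<close> by blast
  qed
  have T_sep: "\<exists>m. F \<inter> mtopology closure_of (T m) = {}" if F: "finite F" "F \<subseteq> M - C" for F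
  proof -
    have "\<forall>\<^sub>F m in sequentially. \<forall>x\<in>F. x \<notin> mtopology closure_of (T m)"
      unfolding T_def using F
      by (intro eventually_ball_finite ballI eventually_not_in_closure_of_neighbourhood[OF C]) auto
    then obtain N where "\<forall>m\<ge>N. \<forall>x\<in>F. x \<notin> mtopology closure_of (T m)"
      unfolding eventually_sequentially by blast
    then show ?thesis
      by blast
  qed
  show thesis
    by (rule that[of T, OF T_open C_T T_sep])
qed

lemma K_Omega_Lindelof_agreeing_countable_subset:
  assumes KOL: "K_Omega_Lindelof mtopology" and "infinite M"
    and A_qc: "\<And>g. g \<in> A \<Longrightarrow> quasicontinuous_map mtopology D2 g"
    and approx: "\<And>F. finite F \<Longrightarrow> F \<subseteq> M \<Longrightarrow> \<exists>g\<in>A. \<forall>x\<in>F. g x = f x"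
    and H: "finite H" "H \<subseteq> M"
  shows "\<exists>B\<subseteq>A. countable B \<and> (\<forall>g\<in>B. \<forall>x\<in>H. g x = f x) \<and>
    (\<forall>F. finite F \<and> F \<subseteq> M - discontinuity_points mtopology f \<longrightarrow>
       (\<exists>g\<in>B. F \<subseteq> mtopology closure_of (mtopology interior_of {x \<in> M. g x = f x})))"
proof -
  let ?C = "discontinuity_points mtopology f"
  let ?V = "\<lambda>g. mtopology interior_of {x \<in> M. g x = f x}"
  let ?I = "{g \<in> A. \<forall>x\<in>H. g x = f x}"
  obtain T :: "nat \<Rightarrow> 'a set" where T_open: "\<And>m. openin mtopology (T m)" and C_T: "\<And>m. ?C \<subseteq> T m"
    and T_sep: "\<And>F. finite F \<Longrightarrow> F \<subseteq> M - ?C \<Longrightarrow> \<exists>m. F \<inter> mtopology closure_of (T m) = {}"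
    by (rule closedin_shrinking_open_neighbourhoods[OF closedin_discontinuity_points[of mtopology f]]) blast
  have "\<exists>J\<subseteq>?I. countable J \<and> (\<forall>F. finite F \<and> F \<subseteq> topspace mtopology \<longrightarrow>
          (\<exists>g\<in>J. F \<subseteq> mtopology closure_of (?V g \<union> T m)))" for m
  proof (rule K_Omega_Lindelof_countable_omega_subcover[OF KOL regular_space_mtopology t1_space_mtopology])
    show "infinite (topspace mtopology)"
      using \<open>infinite M\<close> by simp
    show "openin mtopology (?V g \<union> T m)" for g
      by (intro openin_Un openin_interior_of T_open)
    show "\<exists>g\<in>?I. F \<subseteq> mtopology closure_of (?V g \<union> T m)"
      if F: "finite F" "F \<subseteq> topspace mtopology" for F
    proof -
      have "\<exists>g\<in>A. (\<forall>x\<in>H. g x = f x) \<and>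
          F \<subseteq> mtopology closure_of (mtopology interior_of {x \<in> topspace mtopology. g x = f x} \<union> T m)"
      proof (rule quasicontinuous_map_D2_agreeing_closure_cover)
        show "\<exists>g\<in>A. \<forall>x\<in>F'. g x = f x" if "finite F'" "F' \<subseteq> topspace mtopology" for F'
          using approx that by simp
      qed (use A_qc T_open C_T H F in simp_all)
      then show ?thesis
        by (simp add: Bex_def)
    qed
  qed
  then have "\<exists>J. \<forall>m. J m \<subseteq> ?I \<and> countable (J m) \<and>
      (\<forall>F. finite F \<and> F \<subseteq> M \<longrightarrow> (\<exists>g\<in>J m. F \<subseteq> mtopology closure_of (?V g \<union> T m)))"
    by (intro choice allI) simp
  then obtain J where J: "\<forall>m. J m \<subseteq> ?I \<and> countable (J m) \<and>
      (\<forall>F. finite F \<and> F \<subseteq> M \<longrightarrow> (\<exists>g\<in>J m. F \<subseteq> mtopology closure_of (?V g \<union> T m)))" ..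
  have J_sub: "J m \<subseteq> ?I" and J_countable: "countable (J m)"
    and J_omega: "\<forall>F. finite F \<and> F \<subseteq> M \<longrightarrow> (\<exists>g\<in>J m. F \<subseteq> mtopology closure_of (?V g \<union> T m))"
    for m
    using J by simp_all
  show ?thesis
  proof (intro exI[of _ "\<Union>m. J m"] conjI ballI allI impI)
    show "(\<Union>m. J m) \<subseteq> A"
      using J_sub by blast
    show "countable (\<Union>m. J m)"
      using J_countable by (intro countable_UN) simp_all
    show "g x = f x" if "g \<in> (\<Union>m. J m)" "x \<in> H" for g x
      using J_sub that by blast
    fix F assume F: "finite F \<and> F \<subseteq> M - ?C"
    then obtain m where m: "F \<inter> mtopology closure_of (T m) = {}"
      using T_sep[of F] by blast
    have "finite F \<and> F \<subseteq> M"
      using F by blast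
    then obtain g where g: "g \<in> J m" "F \<subseteq> mtopology closure_of (?V g \<union> T m)"
      using J_omega[of m] by blast
    with m have "F \<subseteq> mtopology closure_of (?V g)"
      by auto
    then show "\<exists>g\<in>\<Union>m. J m. F \<subseteq> mtopology closure_of (?V g)"
      using g(1) by blast
  qed
qed

lemma K_Omega_Lindelof_agreeing_countable_subsets:
  assumes KOL: "K_Omega_Lindelof mtopology" and "infinite M"
    and A_qc: "\<And>g. g \<in> A \<Longrightarrow> quasicontinuous_map mtopology D2 g"
    and approx: "\<And>F. finite F \<Longrightarrow> F \<subseteq> M \<Longrightarrow> \<exists>g\<in>A. \<forall>x\<in>F. g x = f x"
  shows "\<exists>Bh. \<forall>H. finite H \<longrightarrow> Bh H \<subseteq> A \<and> countable (Bh H) \<and>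
    (\<forall>g\<in>Bh H. \<forall>x\<in>H \<inter> M. g x = f x) \<and>
    (\<forall>F. finite F \<and> F \<subseteq> M - discontinuity_points mtopology f \<longrightarrow>
       (\<exists>g\<in>Bh H. F \<subseteq> mtopology closure_of (mtopology interior_of {x \<in> M. g x = f x})))"
proof -
  have "\<exists>B. finite H \<longrightarrow> B \<subseteq> A \<and> countable B \<and> (\<forall>g\<in>B. \<forall>x\<in>H \<inter> M. g x = f x) \<and>
      (\<forall>F. finite F \<and> F \<subseteq> M - discontinuity_points mtopology f \<longrightarrow>
         (\<exists>g\<in>B. F \<subseteq> mtopology closure_of (mtopology interior_of {x \<in> M. g x = f x})))" for H
  proof (cases "finite H")
    case True
    then show ?thesis
      using K_Omega_Lindelof_agreeing_countable_subset[OF KOL \<open>infinite M\<close> A_qc approx, of "H \<inter> M"]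
      by auto
  qed simp
  then show ?thesis
    by (intro choice allI)
qed

lemma K_Omega_Lindelof_approximating_countable_subset:
  assumes KOL: "K_Omega_Lindelof mtopology" and "infinite M"
    and f_qc: "quasicontinuous_map mtopology D2 f"
    and A_qc: "\<And>g. g \<in> A \<Longrightarrow> quasicontinuous_map mtopology D2 g"
    and approx: "\<And>F. finite F \<Longrightarrow> F \<subseteq> M \<Longrightarrow> \<exists>g\<in>A. \<forall>x\<in>F. g x = f x"
  shows "\<exists>B\<subseteq>A. countable B \<and> (\<forall>F. finite F \<and> F \<subseteq> M \<longrightarrow> (\<exists>g\<in>B. \<forall>x\<in>F. g x = f x))"
proof -
  let ?C = "discontinuity_points mtopology f"
  let ?V = "\<lambda>g. mtopology interior_of {x \<in> M. g x = f x}"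
  obtain Bh where Bh: "\<forall>H. finite H \<longrightarrow> Bh H \<subseteq> A \<and> countable (Bh H) \<and>
      (\<forall>g\<in>Bh H. \<forall>x\<in>H \<inter> M. g x = f x) \<and>
      (\<forall>F. finite F \<and> F \<subseteq> M - ?C \<longrightarrow> (\<exists>g\<in>Bh H. F \<subseteq> mtopology closure_of (?V g)))"
    using K_Omega_Lindelof_agreeing_countable_subsets[OF KOL \<open>infinite M\<close> A_qc approx] ..
  have Bh_sub: "Bh H \<subseteq> A" and Bh_countable: "countable (Bh H)"
    and Bh_agree: "\<forall>g\<in>Bh H. \<forall>x\<in>H \<inter> M. g x = f x"
    and Bh_omega: "\<forall>F. finite F \<and> F \<subseteq> M - ?C \<longrightarrow> (\<exists>g\<in>Bh H. F \<subseteq> mtopology closure_of (?V g))"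
    if "finite H" for H
    using Bh that by simp_all
  \<comment> \<open>Q will contain C and the frontiers of the sets int{g = f} for the g chosen for finite
    subsets of Q; off Q, a point of the closure of int{g = f} avoiding its frontier lies in {g = f}.\<close>
  define G where "G H = (\<Union>g\<in>Bh H. mtopology frontier_of (?V g))" for H
  have "countable (G H)" if "finite H" for H
    unfolding G_def
  proof (intro countable_UN)
    show "countable (mtopology frontier_of (?V g))" for g
      by (rule K_Omega_Lindelof_imp_countable_nowhere_dense[OF KOL closedin_frontier_of
            interior_of_frontier_of_openin[OF openin_interior_of]])
  qed (fact Bh_countable[OF that])
  moreover have "countable ?C"
    by (rule K_Omega_Lindelof_imp_countable_nowhere_dense[OF KOL closedin_discontinuity_points
          interior_of_discontinuity_points[OF f_qc]])
  ultimately have "\<exists>Q. countable Q \<and> ?C \<subseteq> Q \<and> (\<forall>H. finite H \<and> H \<subseteq> Q \<longrightarrow> G H \<subseteq> Q)"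
    by (intro countable_closure_under_finitary_map)
  then obtain Q where Q: "countable Q" "?C \<subseteq> Q" and G_Q: "\<forall>H. finite H \<and> H \<subseteq> Q \<longrightarrow> G H \<subseteq> Q"
    by blast
  define B where "B = (\<Union>H\<in>{H. finite H \<and> H \<subseteq> Q}. Bh H)"
  have "\<exists>g\<in>B. \<forall>x\<in>F. g x = f x" if F: "finite F" "F \<subseteq> M" for F
  proof -
    have H: "finite (F \<inter> Q)" "F \<inter> Q \<subseteq> Q"
      using F by auto
    have "finite (F - Q) \<and> F - Q \<subseteq> M - ?C"
      using F Q(2) by auto
    then obtain g where g: "g \<in> Bh (F \<inter> Q)" "F - Q \<subseteq> mtopology closure_of (?V g)"
      using Bh_omega[OF H(1)] by blast
    have "G (F \<inter> Q) \<subseteq> Q"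
      using G_Q H by blast
    then have "mtopology frontier_of (?V g) \<subseteq> Q"
      using g(1) unfolding G_def by blast
    then have "F - Q \<subseteq> {x \<in> M. g x = f x}"
      using g(2) closure_of_interior_of_diff_frontier_of[of mtopology "{x \<in> M. g x = f x}"] by blast
    moreover have "\<forall>x\<in>F \<inter> Q. g x = f x"
      using Bh_agree[OF H(1)] g(1) F(2) by blast
    moreover have "g \<in> B"
      unfolding B_def using H g(1) by blast
    ultimately show ?thesis
      by blast
  qed
  moreover have "countable B"
    unfolding B_def using Q(1) Bh_countable
    by (intro countable_UN countable_Collect_finite_subset) simp_all
  moreover have "B \<subseteq> A"
    unfolding B_def using Bh_sub by blast
  ultimately show ?thesis
    by blast
qed


lemma K_Omega_Lindelof_imp_countable_tightness_Qp:
  assumes KOL: "K_Omega_Lindelof mtopology"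
  shows "countable_tightness (Qp mtopology)"
  unfolding countable_tightness_def
proof (intro ballI allI impI)
  fix f A
  assume f: "f \<in> topspace (Qp mtopology)"
    and "A \<subseteq> topspace (Qp mtopology) \<and> f \<in> Qp mtopology closure_of A"
  then have A_sub: "A \<subseteq> topspace (Qp mtopology)" and f_cl: "f \<in> Qp mtopology closure_of A"
    by simp_all
  have approx_A: "\<forall>F. finite F \<and> F \<subseteq> M \<longrightarrow> (\<exists>g\<in>A. \<forall>x\<in>F. g x = f x)"
    using f_cl unfolding in_closure_of_Qp[OF A_sub] by simp
  have f_qc: "quasicontinuous_map mtopology D2 f"
    using f unfolding topspace_Qp by blast
  have A_qc: "quasicontinuous_map mtopology D2 g" if "g \<in> A" for g
    using A_sub that unfolding topspace_Qp by blast
  have "\<exists>B\<subseteq>A. countable B \<and> (\<forall>F. finite F \<and> F \<subseteq> M \<longrightarrow> (\<exists>g\<in>B. \<forall>x\<in>F. g x = f x))"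
  proof (cases "finite M")
    case True
    then obtain g where "g \<in> A" "\<forall>x\<in>M. g x = f x"
      using approx_A by blast
    then show ?thesis
      by (intro exI[of _ "{g}"]) auto
  next
    case False
    have "\<exists>g\<in>A. \<forall>x\<in>F. g x = f x" if "finite F" "F \<subseteq> M" for F
      using approx_A that by blast
    with False show ?thesis
      by (intro K_Omega_Lindelof_approximating_countable_subset[OF KOL _ f_qc A_qc])
  qed
  then obtain B where B: "B \<subseteq> A" "countable B"
    and approx_B: "\<forall>F. finite F \<and> F \<subseteq> M \<longrightarrow> (\<exists>g\<in>B. \<forall>x\<in>F. g x = f x)"
    by blast
  have B_sub: "B \<subseteq> topspace (Qp mtopology)"
    using A_sub B(1) by blast
  have "f \<in> Qp mtopology closure_of B"
    unfolding in_closure_of_Qp[OF B_sub] using f approx_B by simp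
  then show "\<exists>B\<subseteq>A. countable B \<and> f \<in> Qp mtopology closure_of B"
    using B by blast
qed

end

theorem corollary3p7:
  fixes X :: "'a topology"
  assumes "metrizable_space X"
  shows "K_Omega_Lindelof X \<longleftrightarrow> countable_tightness (Qp X)"
proof -
  obtain M d where "Metric_space M d" and X: "X = Metric_space.mtopology M d"
    using assms unfolding metrizable_space_def by blast
  then have "K_Omega_Lindelof X \<Longrightarrow> countable_tightness (Qp X)"
    using Metric_space.K_Omega_Lindelof_imp_countable_tightness_Qp by blast
  then show ?thesis
    using countable_tightness_Qp_imp_K_Omega_Lindelof by blast
qed

end
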